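(* Let $G$ be a connected graph with $\dim(G)=n(G)-2\ge 2$, and let $\ell\ge 1$ be an integer. Then $D(G)=n(G)-\ell$ if and only if $G$ is isomorphic to one of the following graphs: (a) $K_{\ell+1,\ell+1}$; (b) $K_{t,\ell}$ with $t\ge \ell+1$; (c) $K_\ell+\overline{K_t}$ with $t\ge \ell$; (d) $K_t+\overline{K_\ell}$ with $t\ge \ell\ge 2$; (e) $K_{\ell-1}+(K_t\cup K_1)$ with $t\ge \max\{2,\ell-1\}$; (f) $K_t+(K_{\ell-1}\cup K_1)$ with $t\ge\max\{2,\ell-1\}$.
   Context: All graphs are finite and simple; $n(G)=|V(G)|$. For a connected graph $G$ with shortest-path distance $d_G$, a set $S\subseteq V(G)$ is resolving if for any two distinct vertices $x,y$ there is $s\in S$ with $d_G(x,s)\neq d_G(y,s)$; the metric dimension $\dim(G)$ is the minimum size of a resolving set. A distinguishing coloring of a graph $G$ is a (not necessarily proper) vertex coloring such that the only automorphism of $G$ mapping every vertex to a vertex of the same color is the identity; the distinguishing number $D(G)$ is the minimum number of colors in a distinguishing coloring of $G$. $K_{s,t}$ is the complete bipartite graph, $\overline{K_t}$ the edgeless graph on $t$ vertices, $G\cup H$ the disjoint union, and the join $G+H$ is obtained from $G\cup H$ by adding all edges between $V(G)$ and $V(H)$. *)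

theory Defs
  imports Main
begin

type_synonym 'a graph = "'a set \<times> ('a \<Rightarrow> 'a \<Rightarrow> bool)"

definition verts :: "'a graph \<Rightarrow> 'a set" where "verts G = fst G"
definition adj :: "'a graph \<Rightarrow> 'a \<Rightarrow> 'a \<Rightarrow> bool" where "adj G = snd G"

definition simple_graph :: "'a graph \<Rightarrow> bool" where
  "simple_graph G \<longleftrightarrow> finite (verts G) \<and>
     (\<forall>x y. adj G x y \<longrightarrow> x \<in> verts G \<and> y \<in> verts G \<and> x \<noteq> y \<and> adj G y x)"

definition order :: "'a graph \<Rightarrow> nat" where "order G = card (verts G)"

fun is_walk :: "'a graph \<Rightarrow> 'a list \<Rightarrow> bool" where
  "is_walk G [] = False"
| "is_walk G [x] = (x \<in> verts G)"
| "is_walk G (x # y # xs) = (x \<in> verts G \<and> adj G x y \<and> is_walk G (y # xs))"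

definition connected_graph :: "'a graph \<Rightarrow> bool" where
  "connected_graph G \<longleftrightarrow> verts G \<noteq> {} \<and>
     (\<forall>x\<in>verts G. \<forall>y\<in>verts G. \<exists>w. is_walk G w \<and> hd w = x \<and> last w = y)"

definition gdist :: "'a graph \<Rightarrow> 'a \<Rightarrow> 'a \<Rightarrow> nat" where
  "gdist G x y = (LEAST n. \<exists>w. is_walk G w \<and> hd w = x \<and> last w = y \<and> length w = Suc n)"

definition resolving :: "'a graph \<Rightarrow> 'a set \<Rightarrow> bool" where
  "resolving G S \<longleftrightarrow> S \<subseteq> verts G \<and>
     (\<forall>x\<in>verts G. \<forall>y\<in>verts G. x \<noteq> y \<longrightarrow> (\<exists>s\<in>S. gdist G x s \<noteq> gdist G y s))"

definition metric_dim :: "'a graph \<Rightarrow> nat" where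
  "metric_dim G = (LEAST k. \<exists>S. resolving G S \<and> card S = k)"

definition automorphism :: "'a graph \<Rightarrow> ('a \<Rightarrow> 'a) \<Rightarrow> bool" where
  "automorphism G f \<longleftrightarrow> bij_betw f (verts G) (verts G) \<and>
     (\<forall>x\<in>verts G. \<forall>y\<in>verts G. adj G x y \<longleftrightarrow> adj G (f x) (f y))"

definition distinguishing :: "'a graph \<Rightarrow> ('a \<Rightarrow> nat) \<Rightarrow> bool" where
  "distinguishing G c \<longleftrightarrow> (\<forall>f. automorphism G f \<and> (\<forall>x\<in>verts G. c (f x) = c x)
      \<longrightarrow> (\<forall>x\<in>verts G. f x = x))"

definition distinguishing_number :: "'a graph \<Rightarrow> nat" where
  "distinguishing_number G = (LEAST k. \<exists>c. c ` verts G \<subseteq> {..<k} \<and> distinguishing G c)"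

definition isomorphic :: "'a graph \<Rightarrow> 'b graph \<Rightarrow> bool" where
  "isomorphic G H \<longleftrightarrow> (\<exists>f. bij_betw f (verts G) (verts H) \<and>
     (\<forall>x\<in>verts G. \<forall>y\<in>verts G. adj G x y \<longleftrightarrow> adj H (f x) (f y)))"

definition complete :: "nat \<Rightarrow> nat graph" where
  "complete t = ({..<t}, \<lambda>x y. x < t \<and> y < t \<and> x \<noteq> y)"

definition edgeless :: "nat \<Rightarrow> nat graph" where
  "edgeless t = ({..<t}, \<lambda>x y. False)"

definition complete_bipartite :: "nat \<Rightarrow> nat \<Rightarrow> (nat + nat) graph" where
  "complete_bipartite s t = (Inl ` {..<s} \<union> Inr ` {..<t},
     \<lambda>x y. (\<exists>i j. i < s \<and> j < t \<and> ((x = Inl i \<and> y = Inr j) \<or> (x = Inr j \<and> y = Inl i))))"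

definition gunion :: "'a graph \<Rightarrow> 'b graph \<Rightarrow> ('a + 'b) graph" where
  "gunion G H = (Inl ` verts G \<union> Inr ` verts H,
     \<lambda>x y. case (x, y) of
        (Inl a, Inl b) \<Rightarrow> adj G a b
      | (Inr a, Inr b) \<Rightarrow> adj H a b
      | _ \<Rightarrow> False)"

definition gjoin :: "'a graph \<Rightarrow> 'b graph \<Rightarrow> ('a + 'b) graph" where
  "gjoin G H = (Inl ` verts G \<union> Inr ` verts H,
     \<lambda>x y. case (x, y) of
        (Inl a, Inl b) \<Rightarrow> adj G a b
      | (Inr a, Inr b) \<Rightarrow> adj H a b
      | (Inl a, Inr b) \<Rightarrow> a \<in> verts G \<and> b \<in> verts H
      | (Inr a, Inl b) \<Rightarrow> a \<in> verts H \<and> b \<in> verts G)"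

end

theory Submission
  imports Defs
begin

text \<open>If \<open>dim G = n - 2\<close>, no set of \<open>n - 3\<close> vertices resolves \<open>G\<close>, so among any three
  vertices two have the same distance to every other vertex. This forces diameter 2 and no induced
  \<open>P\<^sub>4\<close>, and then \<open>G\<close> is complete bipartite or of the form \<open>K\<^sub>X + (K\<^sub>Y \<union> \<overline>K\<^sub>Z)\<close> with
  \<open>Y = {}\<close> or \<open>|Z| = 1\<close>. The parts of these graphs consist of twins, which need distinct
  colours, and except in the balanced \<open>K\<^sub>m\<^sub>,\<^sub>m\<close> the parts have distinct degrees, so \<open>D(G)\<close>
  is the largest part size (and \<open>m + 1\<close> for \<open>K\<^sub>m\<^sub>,\<^sub>m\<close>).\<close>

section \<open>Distances\<close>

lemma simple_graph_adjD:
  assumes "simple_graph G" "adj G x y"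
  shows "x \<in> verts G" "y \<in> verts G" "x \<noteq> y" "adj G y x"
  using assms unfolding simple_graph_def by auto

lemma simple_graph_finite: "simple_graph G \<Longrightarrow> finite (verts G)"
  unfolding simple_graph_def by auto

definition has_walk :: "'a graph \<Rightarrow> 'a \<Rightarrow> 'a \<Rightarrow> nat \<Rightarrow> bool" where
  "has_walk G x y n \<longleftrightarrow> (\<exists>w. is_walk G w \<and> hd w = x \<and> last w = y \<and> length w = Suc n)"

lemma gdist_le: "has_walk G x y n \<Longrightarrow> gdist G x y \<le> n"
  unfolding gdist_def has_walk_def by (rule Least_le)

lemma has_walk_gdist:
  assumes "connected_graph G" "x \<in> verts G" "y \<in> verts G"
  shows "has_walk G x y (gdist G x y)"
proof -
  obtain w where w: "is_walk G w" "hd w = x" "last w = y"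
    using assms unfolding connected_graph_def by blast
  then have "w \<noteq> []" by (cases w) auto
  then have "has_walk G x y (length w - 1)"
    unfolding has_walk_def using w by (intro exI[of _ w]) auto
  then show ?thesis
    unfolding gdist_def has_walk_def by (rule LeastI)
qed

lemma gdist_self:
  assumes "x \<in> verts G"
  shows "gdist G x x = 0"
proof -
  have "has_walk G x x 0" unfolding has_walk_def using assms by (intro exI[of _ "[x]"]) auto
  then show ?thesis using gdist_le by fastforce
qed

lemma gdist_eq_0_iff:
  assumes "connected_graph G" "x \<in> verts G" "y \<in> verts G"
  shows "gdist G x y = 0 \<longleftrightarrow> x = y"
proof
  assume "gdist G x y = 0"
  with has_walk_gdist[OF assms] obtain w where "is_walk G w" "hd w = x" "last w = y" "length w = 1"
    unfolding has_walk_def by auto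
  then show "x = y" by (cases w) auto
qed (use gdist_self[OF assms(2)] in simp)

lemma gdist_SucE:
  assumes "simple_graph G" "connected_graph G" "x \<in> verts G" "y \<in> verts G"
    and "gdist G x y = Suc k"
  obtains z where "adj G x z" "gdist G z y = k"
proof -
  from has_walk_gdist[OF assms(2-4)] assms(5) obtain w where
    w: "is_walk G w" "hd w = x" "last w = y" "length w = Suc (Suc k)" unfolding has_walk_def by auto
  then obtain z r where wz: "w = x # z # r"
    by (cases w; cases "tl w") auto
  have xz: "adj G x z" using w wz by simp
  have z: "z \<in> verts G" using simple_graph_adjD[OF assms(1) xz] by simp
  have "has_walk G z y k" unfolding has_walk_def using w wz by (intro exI[of _ "z # r"]) auto
  then have le: "gdist G z y \<le> k" by (rule gdist_le)
  obtain v where v: "is_walk G v" "hd v = z" "last v = y" "length v = Suc (gdist G z y)"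
    using has_walk_gdist[OF assms(2) z assms(4)] unfolding has_walk_def by auto
  then obtain vs where "v = z # vs" by (cases v) auto
  then have "has_walk G x y (Suc (gdist G z y))"
    unfolding has_walk_def using v xz assms(3) by (intro exI[of _ "x # v"]) auto
  then have "Suc k \<le> Suc (gdist G z y)" using gdist_le assms(5) by metis
  with le xz that show ?thesis by simp
qed

lemma gdist_eq_1_iff:
  assumes "simple_graph G" "connected_graph G" "x \<in> verts G" "y \<in> verts G" "x \<noteq> y"
  shows "gdist G x y = 1 \<longleftrightarrow> adj G x y"
proof
  assume "adj G x y"
  then have "has_walk G x y 1" unfolding has_walk_def using simple_graph_adjD[OF assms(1)]
    by (intro exI[of _ "[x, y]"]) auto
  then show "gdist G x y = 1"
    using gdist_le gdist_eq_0_iff[OF assms(2-4)] assms(5) by fastforce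
next
  assume "gdist G x y = 1"
  then obtain z where "adj G x z" "gdist G z y = 0"
    using gdist_SucE[OF assms(1-4)] by (metis One_nat_def)
  then show "adj G x y"
    using gdist_eq_0_iff[OF assms(2) _ assms(4)] simple_graph_adjD[OF assms(1)] by metis
qed

definition twin :: "'a graph \<Rightarrow> 'a \<Rightarrow> 'a \<Rightarrow> bool" where
  "twin G u v \<longleftrightarrow> u \<in> verts G \<and> v \<in> verts G \<and> u \<noteq> v \<and>
     (\<forall>w\<in>verts G. w \<noteq> u \<and> w \<noteq> v \<longrightarrow> (adj G u w \<longleftrightarrow> adj G v w))"

definition universal :: "'a graph \<Rightarrow> 'a \<Rightarrow> bool" where
  "universal G u \<longleftrightarrow> u \<in> verts G \<and> (\<forall>v\<in>verts G. v \<noteq> u \<longrightarrow> adj G u v)"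

definition complete_bipartition :: "'a graph \<Rightarrow> 'a set \<Rightarrow> 'a set \<Rightarrow> bool" where
  "complete_bipartition G P Q \<longleftrightarrow> verts G = P \<union> Q \<and> P \<inter> Q = {} \<and>
     (\<forall>x y. adj G x y \<longleftrightarrow> (x \<in> P \<and> y \<in> Q) \<or> (x \<in> Q \<and> y \<in> P))"

text \<open>\<open>G = K\<^sub>X + (K\<^sub>Y \<union> \<overline>K\<^sub>Z)\<close>.\<close>

definition join_partition :: "'a graph \<Rightarrow> 'a set \<Rightarrow> 'a set \<Rightarrow> 'a set \<Rightarrow> bool" where
  "join_partition G X Y Z \<longleftrightarrow> verts G = X \<union> Y \<union> Z \<and> X \<inter> Y = {} \<and> X \<inter> Z = {} \<and> Y \<inter> Z = {} \<and>
     (\<forall>x y. adj G x y \<longleftrightarrow> x \<in> verts G \<and> y \<in> verts G \<and> x \<noteq> y \<and>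
        (x \<in> X \<or> y \<in> X \<or> (x \<in> Y \<and> y \<in> Y)))"

section \<open>Graphs with metric dimension \<open>n - 2\<close>\<close>

locale dim_order_minus_2 =
  fixes G :: "'a graph"
  assumes simple: "simple_graph G" and connected: "connected_graph G"
    and dim: "metric_dim G = order G - 2" and order_ge: "order G - 2 \<ge> 2"
begin

abbreviation "V \<equiv> verts G"
abbreviation "A \<equiv> adj G"

lemma finite_V: "finite V"
  using simple_graph_finite[OF simple] .

lemma adjD: "A x y \<Longrightarrow> x \<in> V" "A x y \<Longrightarrow> y \<in> V" "A x y \<Longrightarrow> x \<noteq> y" "A x y \<Longrightarrow> A y x"
  using simple_graph_adjD[OF simple] by blast+

lemma adj_sym: "A x y \<longleftrightarrow> A y x"
  using adjD(4) by blast

lemma card_V_ge_4: "card V \<ge> 4"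
  using order_ge unfolding order_def by simp

lemma dist_eq_0_iff: "x \<in> V \<Longrightarrow> y \<in> V \<Longrightarrow> gdist G x y = 0 \<longleftrightarrow> x = y"
  by (rule gdist_eq_0_iff[OF connected])

lemma dist_eq_1_iff: "x \<in> V \<Longrightarrow> y \<in> V \<Longrightarrow> x \<noteq> y \<Longrightarrow> gdist G x y = 1 \<longleftrightarrow> A x y"
  by (rule gdist_eq_1_iff[OF simple connected])

lemma resolving_V: "resolving G V"
  unfolding resolving_def using gdist_self dist_eq_0_iff by (metis subset_refl)

lemma card_resolving_ge: "resolving G S \<Longrightarrow> card V - 2 \<le> card S"
  using dim unfolding metric_dim_def order_def by (metis (mono_tags, lifting) Least_le)

lemma obtain_resolving:
  obtains S where "resolving G S" "card S = card V - 2"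
proof -
  have "\<exists>S. resolving G S \<and> card S = metric_dim G"
    unfolding metric_dim_def
    by (rule LeastI_ex[where P = "\<lambda>k. \<exists>S. resolving G S \<and> card S = k"]) (use resolving_V in blast)
  then show ?thesis using dim that unfolding order_def by auto
qed

text \<open>Otherwise the complement of the triple would be a resolving set of size \<open>n - 3\<close>.\<close>

lemma no_triple_resolved_by_rest:
  assumes "x \<in> V" "y \<in> V" "z \<in> V" "x \<noteq> y" "x \<noteq> z" "y \<noteq> z"
    and "\<And>p q. p \<in> {x, y, z} \<Longrightarrow> q \<in> {x, y, z} \<Longrightarrow> p \<noteq> q \<Longrightarrow>
           \<exists>s\<in>V - {x, y, z}. gdist G p s \<noteq> gdist G q s"
  shows False
proof -
  let ?S = "V - {x, y, z}"
  have "resolving G ?S"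
    unfolding resolving_def
  proof (intro conjI ballI impI)
    fix p q assume pq: "p \<in> V" "q \<in> V" "p \<noteq> q"
    show "\<exists>s\<in>?S. gdist G p s \<noteq> gdist G q s"
    proof (cases "p \<in> ?S \<or> q \<in> ?S")
      case True
      then show ?thesis using gdist_self dist_eq_0_iff pq by metis
    next
      case False
      then show ?thesis using assms(7) pq by blast
    qed
  qed auto
  then have "card V - 2 \<le> card ?S" by (rule card_resolving_ge)
  moreover have "card ?S = card V - 3" using assms finite_V by (simp add: card_Diff_subset)
  ultimately show False using card_V_ge_4 by simp
qed

lemma triple_twin_pair:
  assumes "x \<in> V" "y \<in> V" "z \<in> V" "x \<noteq> y" "x \<noteq> z" "y \<noteq> z"
  obtains p q where "p \<in> {x, y, z}" "q \<in> {x, y, z}" "p \<noteq> q"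
    "\<forall>s\<in>V - {x, y, z}. A p s \<longleftrightarrow> A q s"
proof (rule ccontr)
  assume "\<not> thesis"
  with that have separated: "\<exists>s\<in>V - {x, y, z}. A p s \<noteq> A q s"
    if "p \<in> {x, y, z}" "q \<in> {x, y, z}" "p \<noteq> q" for p q
    using that by blast
  show False
  proof (rule no_triple_resolved_by_rest[OF assms])
    fix p q assume pq: "p \<in> {x, y, z}" "q \<in> {x, y, z}" "p \<noteq> q"
    then obtain s where s: "s \<in> V - {x, y, z}" "A p s \<noteq> A q s" using separated by blast
    then have "gdist G p s \<noteq> gdist G q s"
      using pq assms dist_eq_1_iff by (metis DiffD1 DiffD2 insertE singletonD)
    then show "\<exists>s\<in>V - {x, y, z}. gdist G p s \<noteq> gdist G q s" using s by blast
  qed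
qed

lemma no_triple_separated_by_rest:
  assumes "x \<in> V" "y \<in> V" "z \<in> V" "x \<noteq> y" "x \<noteq> z" "y \<noteq> z"
    and "s1 \<in> V" "s1 \<notin> {x, y, z}" "A x s1 \<noteq> A y s1"
    and "s2 \<in> V" "s2 \<notin> {x, y, z}" "A x s2 \<noteq> A z s2"
    and "s3 \<in> V" "s3 \<notin> {x, y, z}" "A y s3 \<noteq> A z s3"
  shows False
  using triple_twin_pair[OF assms(1-6)] assms(7-) by (metis Diff_iff insertE singletonD)

lemma ex_nonadjacent: "\<exists>x\<in>V. \<exists>y\<in>V. x \<noteq> y \<and> \<not> A x y"
proof (rule ccontr)
  assume complete: "\<not> ?thesis"
  obtain S where S: "resolving G S" "card S = card V - 2" using obtain_resolving by blast
  have SV: "S \<subseteq> V" using S unfolding resolving_def by auto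
  have "card (V - S) = 2" using S SV finite_V card_V_ge_4 by (simp add: card_Diff_subset finite_subset)
  then obtain x y where xy: "V - S = {x, y}" "x \<noteq> y" by (meson card_2_iff)
  then have "\<forall>s\<in>S. gdist G x s = gdist G y s"
    using dist_eq_1_iff complete SV by (metis Diff_iff insertCI subsetD)
  then show False using S xy unfolding resolving_def by blast
qed

text \<open>On a shortest path \<open>x z\<^sub>1 z\<^sub>2 \<dots> y\<close> of length at least 3, the vertex \<open>y\<close> resolves
  all pairs of the triple \<open>x, z\<^sub>1, z\<^sub>2\<close>.\<close>

lemma nonadjacent_common_neighbour:
  assumes "x \<in> V" "y \<in> V" "x \<noteq> y" "\<not> A x y"
  obtains w where "A x w" "A w y"
proof -
  have "gdist G x y \<noteq> 0" "gdist G x y \<noteq> 1" using assms dist_eq_0_iff dist_eq_1_iff by auto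
  then obtain k where k: "gdist G x y = Suc (Suc k)"
    by (metis One_nat_def not0_implies_Suc)
  obtain z1 where z1: "A x z1" "gdist G z1 y = Suc k"
    using gdist_SucE[OF simple connected assms(1,2) k] by blast
  have z1V: "z1 \<in> V" using adjD z1 by blast
  show thesis
  proof (cases k)
    case 0
    then have "z1 \<noteq> y" using z1(2) gdist_self[OF assms(2)] by auto
    then have "A z1 y" using z1 dist_eq_1_iff[OF z1V assms(2)] 0 by simp
    then show thesis using that z1 by blast
  next
    case (Suc j)
    obtain z2 where z2: "A z1 z2" "gdist G z2 y = Suc j"
      using gdist_SucE[OF simple connected z1V assms(2)] z1(2) Suc by blast
    have z2V: "z2 \<in> V" using adjD z2 by blast
    have y: "y \<in> V - {x, z1, z2}" using gdist_self[OF assms(2)] k z1 z2 assms(2) by auto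
    have "x \<noteq> z1" "x \<noteq> z2" "z1 \<noteq> z2" using k z1 z2 Suc by auto
    then have False
    proof (rule no_triple_resolved_by_rest[OF assms(1) z1V z2V])
      fix p q assume "p \<in> {x, z1, z2}" "q \<in> {x, z1, z2}" "p \<noteq> q"
      then have "gdist G p y \<noteq> gdist G q y" using k z1 z2 Suc by auto
      then show "\<exists>s\<in>V - {x, z1, z2}. gdist G p s \<noteq> gdist G q s" using y by blast
    qed
    then show thesis ..
  qed
qed

lemma no_induced_P4:
  assumes "A a b" "A b c" "A c d" "\<not> A a c" "\<not> A b d" "\<not> A a d"
  shows False
proof -
  have V: "a \<in> V" "b \<in> V" "c \<in> V" "d \<in> V" using adjD assms by blast+
  have "a \<noteq> d" using assms(1,5) adj_sym by blast
  then obtain w where w: "A a w" "A w d" using nonadjacent_common_neighbour[OF V(1,4)] assms(6) by blast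
  have wV: "w \<in> V" using adjD w by blast
  have "w \<noteq> a" "w \<noteq> b" "a \<noteq> b" using adjD(3) w assms(1,5) by blast+
  moreover have "d \<noteq> w" "d \<noteq> a" "d \<noteq> b" "c \<noteq> w" "c \<noteq> a" "c \<noteq> b"
    using adjD(3) adj_sym w assms by metis+
  ultimately show False
    using no_triple_separated_by_rest[of w a b d d c] V wV w assms adj_sym by auto
qed

lemma universal_adj: "universal G u \<Longrightarrow> v \<in> V \<Longrightarrow> v \<noteq> u \<Longrightarrow> A u v \<and> A v u"
  unfolding universal_def using adj_sym by blast

lemma obtain_non_neighbour:
  assumes "x \<in> V" "\<not> universal G x"
  obtains m where "m \<in> V" "m \<noteq> x" "\<not> A x m"
  using assms unfolding universal_def by blast

text \<open>Apply the triple lemma to \<open>u, x, y\<close>: \<open>u\<close> agreeing with \<open>x\<close> off the triple means that \<open>x\<close>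
  is adjacent to everything except possibly \<open>y\<close>.\<close>

lemma nonuniversal_pair:
  assumes u: "universal G u" and x: "x \<in> V" "\<not> universal G x" and y: "y \<in> V" "\<not> universal G y"
    and xy: "x \<noteq> y"
  shows "twin G x y \<or> (\<not> A x y \<and> ((\<forall>s\<in>V - {x, y}. A x s) \<or> (\<forall>s\<in>V - {x, y}. A y s)))"
proof -
  have uV: "u \<in> V" and ux: "u \<noteq> x" "u \<noteq> y" using u x y unfolding universal_def by auto
  obtain p q where pq: "p \<in> {u, x, y}" "q \<in> {u, x, y}" "p \<noteq> q"
    and agree: "\<forall>s\<in>V - {u, x, y}. A p s \<longleftrightarrow> A q s"
    using triple_twin_pair[OF uV x(1) y(1) ux xy] by blast
  have u_adj: "A u s" "A s u" if "s \<in> V" "s \<noteq> u" for s using universal_adj[OF u that] by auto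
  have "(\<forall>s\<in>V - {x, y}. A x s) \<or> (\<forall>s\<in>V - {x, y}. A y s) \<or> twin G x y"
  proof -
    have "(\<forall>s\<in>V - {u, x, y}. A u s \<longleftrightarrow> A x s) \<or> (\<forall>s\<in>V - {u, x, y}. A u s \<longleftrightarrow> A y s)
        \<or> (\<forall>s\<in>V - {u, x, y}. A x s \<longleftrightarrow> A y s)"
      using pq agree by (elim insertE emptyE; simp; metis)
    then show ?thesis
      unfolding twin_def using u_adj x y xy ux by (metis Diff_iff insertE insertI1 singletonD)
  qed
  moreover have "\<not> A x y" if "(\<forall>s\<in>V - {x, y}. A x s) \<or> (\<forall>s\<in>V - {x, y}. A y s)"
    using that obtain_non_neighbour[OF x] obtain_non_neighbour[OF y] adj_sym by (metis Diff_iff empty_iff insertE)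
  ultimately show ?thesis by blast
qed

lemma join_partition_if_nonuniversal_independent:
  assumes "\<forall>x\<in>V. \<forall>y\<in>V. \<not> universal G x \<and> \<not> universal G y \<longrightarrow> \<not> A x y"
  shows "join_partition G {u\<in>V. universal G u} {} {x\<in>V. \<not> universal G x}"
  unfolding join_partition_def using assms universal_adj adjD by blast

text \<open>The non-universal neighbours of \<open>x\<^sub>1\<close> are its twins, and \<open>x\<^sub>1\<close> has exactly one
  non-neighbour \<open>c\<close>; the remaining non-universal vertices form a clique missing \<open>c\<close>.\<close>

lemma join_partition_if_nonuniversal_edge:
  assumes u: "universal G u"
    and x1: "x1 \<in> V" "\<not> universal G x1" and x2: "x2 \<in> V" "\<not> universal G x2" and "A x1 x2"
  shows "\<exists>X Y c. join_partition G X Y {c}"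
proof -
  obtain c where c: "c \<in> V" "c \<noteq> x1" "\<not> A x1 c" using obtain_non_neighbour[OF x1] by blast
  have c_nonuniversal: "\<not> universal G c" using c x1 universal_adj by metis
  have x2_ne: "x2 \<noteq> x1" "x2 \<noteq> c" using \<open>A x1 x2\<close> c adjD(3) by auto
  have twin_x1: "twin G x1 y" if "y \<in> V" "\<not> universal G y" "y \<noteq> x1" "A x1 y" for y
    using nonuniversal_pair[OF u x1 that(1,2) that(3)[symmetric]] that(4) by blast
  have "twin G x1 x2" using twin_x1 x2 x2_ne \<open>A x1 x2\<close> by blast
  then have c_x2: "\<not> A c x2" using c x2_ne adj_sym unfolding twin_def by blast
  have "\<not> twin G x1 c" using \<open>A x1 x2\<close> c_x2 x2 x2_ne unfolding twin_def by blast
  then have x1_adj: "\<forall>s\<in>V - {x1, c}. A x1 s"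
    using nonuniversal_pair[OF u x1 c(1) c_nonuniversal c(2)[symmetric]] c_x2 x2 x2_ne by blast
  define Y where "Y = {y\<in>V. \<not> universal G y} - {c}"
  have Y_twin: "y = x1 \<or> twin G x1 y" if "y \<in> Y" for y
    using that twin_x1 x1_adj unfolding Y_def by blast
  have Y_clique: "A y y'" if "y \<in> Y" "y' \<in> Y" "y \<noteq> y'" for y y'
    using Y_twin[OF that(1)] Y_twin[OF that(2)] that x1_adj adj_sym
    unfolding Y_def twin_def by (metis Diff_iff insertE mem_Collect_eq singletonD)
  have Y_c: "\<not> A y c" if "y \<in> Y" for y
    using Y_twin[OF that] that c unfolding Y_def twin_def by auto
  have "join_partition G {u\<in>V. universal G u} Y {c}"
    unfolding join_partition_def
  proof (intro conjI allI)
    fix x y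
    show "A x y \<longleftrightarrow> x \<in> V \<and> y \<in> V \<and> x \<noteq> y \<and>
      (x \<in> {u\<in>V. universal G u} \<or> y \<in> {u\<in>V. universal G u} \<or> (x \<in> Y \<and> y \<in> Y))"
      using adjD universal_adj Y_clique Y_c adj_sym unfolding Y_def by (smt (verit) Diff_iff
          mem_Collect_eq singletonD)
  qed (use c c_nonuniversal in \<open>auto simp: Y_def\<close>)
  then show ?thesis by blast
qed

text \<open>Take a common neighbour \<open>w\<close> of \<open>x\<close> and \<open>y\<close> and a non-neighbour \<open>v\<close> of \<open>w\<close>; excluding
  induced \<open>P\<^sub>4\<close>'s fixes the adjacencies of \<open>v\<close> and \<open>w\<close> enough to find a triple whose pairs are
  all separated by the remaining vertices.\<close>

lemma nonadjacent_trans: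
  assumes no_universal: "\<forall>v\<in>V. \<not> universal G v" and V: "x \<in> V" "y \<in> V" "z \<in> V"
    and distinct: "x \<noteq> y" "y \<noteq> z" "x \<noteq> z" and xy: "\<not> A x y" and yz: "\<not> A y z"
  shows "\<not> A x z"
proof
  assume xz: "A x z"
  have yx: "\<not> A y x" and zy: "\<not> A z y" and zx: "A z x" using xy yz xz adj_sym by blast+
  obtain w where xw: "A x w" and wy: "A w y"
    using nonadjacent_common_neighbour[OF V(1,2) distinct(1) xy] by blast
  have wV: "w \<in> V" and wx: "A w x" and yw: "A y w" using adjD xw wy by blast+
  have wz: "A w z" using no_induced_P4[OF zx xw wy _ xy zy] adj_sym by metis
  then have zw: "A z w" using adj_sym by blast
  obtain v where v: "v \<in> V" "v \<noteq> w" and wv: "\<not> A w v"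
    using obtain_non_neighbour[OF wV] no_universal wV by blast
  have vw: "\<not> A v w" using wv adj_sym by blast
  have v_ne: "v \<noteq> x" "v \<noteq> y" "v \<noteq> z" using wv wx wy wz by auto
  have w_ne: "w \<noteq> x" "w \<noteq> y" "w \<noteq> z" using xw wy wz adjD(3) by blast+
  show False
  proof (cases "A v y")
    case False
    then have yv: "\<not> A y v" using adj_sym by blast
    have "\<not> A v x" using no_induced_P4[OF yw wx _ yx wv yv] adj_sym by metis
    moreover have "\<not> A v z" using no_induced_P4[OF yw wz _ yz wv yv] adj_sym by metis
    ultimately show False
      using no_triple_separated_by_rest[of x v w z y y] V v wV v_ne w_ne distinct xz xy wy False
      by simp
  next
    case True
    then have yv: "A y v" using adj_sym by blast
    have "A v x" using no_induced_P4[OF xw wy yv xy wv] adj_sym by metis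
    moreover have "A v z" using no_induced_P4[OF zw wy yv zy wv] adj_sym by metis
    ultimately show False
      using no_triple_separated_by_rest[of x y v z w z] V v wV v_ne w_ne distinct xz yz xw vw
      by simp
  qed
qed

text \<open>A non-neighbour of one triangle vertex is, by transitivity of non-adjacency, adjacent to
  the two others; three such vertices separate the triangle.\<close>

lemma no_triangle:
  assumes no_universal: "\<forall>v\<in>V. \<not> universal G v" and "A x y" "A y z" "A x z"
  shows False
proof -
  have V: "x \<in> V" "y \<in> V" "z \<in> V" and ne: "x \<noteq> y" "y \<noteq> z" "x \<noteq> z"
    using assms adjD by blast+
  have separating: "\<exists>s\<in>V. s \<notin> {a, b, c} \<and> \<not> A a s \<and> A b s \<and> A c s"
    if a: "a \<in> V" and ab: "A a b" and ac: "A a c" and "A b c" for a b c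
  proof -
    obtain s where s: "s \<in> V" "s \<noteq> a" "\<not> A a s"
      using obtain_non_neighbour[OF a] no_universal a by blast
    have b: "b \<in> V" "a \<noteq> b" and c: "c \<in> V" "a \<noteq> c" using ab ac adjD by blast+
    have "A b s" using nonadjacent_trans[OF no_universal a s(1) b(1)] s ab b adj_sym by blast
    moreover have "A c s" using nonadjacent_trans[OF no_universal a s(1) c(1)] s ac c adj_sym by blast
    ultimately show ?thesis using s ab ac by blast
  qed
  obtain s1 where s1: "s1 \<in> V" "s1 \<notin> {x, y, z}" "\<not> A x s1" "A y s1" "A z s1"
    using separating[OF V(1) assms(2,4,3)] by blast
  obtain s2 where s2: "s2 \<in> V" "s2 \<notin> {x, y, z}" "\<not> A y s2" "A z s2"
    using separating[OF V(2), of x z] assms adj_sym by blast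
  show False
    by (rule no_triple_separated_by_rest[OF V ne(1,3,2) s1(1,2) _ s1(1,2) _ s2(1,2)])
      (use s1 s2 in auto)
qed

lemma complete_bipartition_if_no_universal:
  assumes no_universal: "\<forall>v\<in>V. \<not> universal G v"
  shows "\<exists>P Q. complete_bipartition G P Q"
proof -
  obtain x0 where x0: "x0 \<in> V" using card_V_ge_4 by fastforce
  define P where "P = {y\<in>V. y = x0 \<or> \<not> A x0 y}"
  define Q where "Q = {y\<in>V. A x0 y}"
  have P_indep: "\<not> A p p'" if p: "p \<in> P" and p': "p' \<in> P" for p p'
  proof (cases "p = p' \<or> p = x0 \<or> p' = x0")
    case True
    then show ?thesis using p p' adjD(3) adj_sym unfolding P_def by blast
  next
    case False
    then have "\<not> A p x0" "\<not> A x0 p'" using p p' adj_sym unfolding P_def by auto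
    then show ?thesis using nonadjacent_trans[OF no_universal _ x0] p p' False unfolding P_def by blast
  qed
  have PQ: "A p q" if p: "p \<in> P" and q: "q \<in> Q" for p q
  proof (cases "p = x0")
    case False
    then have "\<not> A x0 p" "p \<noteq> q" using p q unfolding P_def Q_def by auto
    then show ?thesis
      using nonadjacent_trans[OF no_universal x0, of p q] p q adjD(3) unfolding P_def Q_def by blast
  qed (use q Q_def in simp)
  have Q_indep: "\<not> A q q'" if "q \<in> Q" "q' \<in> Q" for q q'
    using that no_triangle[OF no_universal, of x0 q q'] unfolding Q_def by blast
  have cover: "V = P \<union> Q" and disjoint: "P \<inter> Q = {}"
    unfolding P_def Q_def using adjD(3) by auto
  have "complete_bipartition G P Q"
    unfolding complete_bipartition_def
  proof (intro conjI allI cover disjoint)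
    fix x y
    show "A x y \<longleftrightarrow> (x \<in> P \<and> y \<in> Q) \<or> (x \<in> Q \<and> y \<in> P)"
    proof
      assume "A x y"
      then have "x \<in> P \<union> Q" "y \<in> P \<union> Q" using adjD cover by auto
      then show "(x \<in> P \<and> y \<in> Q) \<or> (x \<in> Q \<and> y \<in> P)"
        using \<open>A x y\<close> P_indep Q_indep by blast
    qed (use PQ adj_sym in blast)
  qed
  then show ?thesis by blast
qed

lemma classification:
  "(\<exists>P Q. complete_bipartition G P Q) \<or> (\<exists>X Z. join_partition G X {} Z) \<or>
     (\<exists>X Y c. join_partition G X Y {c})"
proof (cases "\<exists>u. universal G u")
  case True
  then obtain u where "universal G u" by blast
  then show ?thesis
    using join_partition_if_nonuniversal_independent join_partition_if_nonuniversal_edge by blast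
next
  case False
  then show ?thesis using complete_bipartition_if_no_universal by blast
qed

end

section \<open>Distinguishing number\<close>

definition deg :: "'a graph \<Rightarrow> 'a \<Rightarrow> nat" where
  "deg G x = card {y\<in>verts G. adj G x y}"

lemma automorphism_in: "automorphism G f \<Longrightarrow> x \<in> verts G \<Longrightarrow> f x \<in> verts G"
  unfolding automorphism_def bij_betw_def by auto

lemma automorphism_deg:
  assumes f: "automorphism G f" and x: "x \<in> verts G"
  shows "deg G (f x) = deg G x"
proof -
  have bij: "bij_betw f (verts G) (verts G)"
    and adj: "\<forall>x\<in>verts G. \<forall>y\<in>verts G. adj G x y \<longleftrightarrow> adj G (f x) (f y)"
    using f unfolding automorphism_def by auto
  have "f ` {y\<in>verts G. adj G x y} = {y\<in>verts G. adj G (f x) y}"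
  proof (intro equalityI subsetI)
    fix y assume "y \<in> {y\<in>verts G. adj G (f x) y}"
    moreover then obtain z where "z \<in> verts G" "y = f z" using bij unfolding bij_betw_def by auto
    ultimately show "y \<in> f ` {y\<in>verts G. adj G x y}" using adj x by auto
  qed (use adj x bij_betwE[OF bij] in auto)
  then have "bij_betw f {y\<in>verts G. adj G x y} {y\<in>verts G. adj G (f x) y}"
    using bij_betw_subset[OF bij] by (metis (no_types, lifting) mem_Collect_eq subsetI)
  then show ?thesis unfolding deg_def by (simp add: bij_betw_same_card)
qed

lemma distinguishing_if_inj_on_degree_classes:
  assumes "\<And>x y. x \<in> verts G \<Longrightarrow> y \<in> verts G \<Longrightarrow> c x = c y \<Longrightarrow> deg G x = deg G y \<Longrightarrow> x = y"
  shows "distinguishing G c"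
  unfolding distinguishing_def
  using assms automorphism_in automorphism_deg by metis

text \<open>A colour-preserving automorphism fixes \<open>a\<close>, hence preserves its neighbourhood.\<close>

lemma distinguishing_if_unique_colour:
  assumes a: "a \<in> verts G" and unique: "\<And>y. y \<in> verts G \<Longrightarrow> c y = c a \<Longrightarrow> y = a"
    and inj: "inj_on c {y\<in>verts G. adj G a y}" "inj_on c {y\<in>verts G. \<not> adj G a y}"
  shows "distinguishing G c"
  unfolding distinguishing_def
proof (intro allI impI ballI)
  fix f x assume f: "automorphism G f \<and> (\<forall>x\<in>verts G. c (f x) = c x)" and x: "x \<in> verts G"
  have fx: "f x \<in> verts G" "c (f x) = c x" using automorphism_in[of G f x] f x by simp_all
  have "f a \<in> verts G" "c (f a) = c a" using automorphism_in[of G f a] f a by simp_all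
  then have "f a = a" by (rule unique)
  then have "adj G a (f x) \<longleftrightarrow> adj G a x" using f a x unfolding automorphism_def by metis
  then show "f x = x" using fx x inj by (cases "adj G a x") (auto dest: inj_onD)
qed

text \<open>Swapping two twins is an automorphism.\<close>

lemma twin_colours_differ:
  assumes simple: "simple_graph G" and twin: "twin G u v" and c: "distinguishing G c"
  shows "c u \<noteq> c v"
proof
  assume same_colour: "c u = c v"
  define f where "f x = (if x = u then v else if x = v then u else x)" for x
  have uv: "u \<in> verts G" "v \<in> verts G" "u \<noteq> v" using twin unfolding twin_def by auto
  have "f ` verts G = verts G" unfolding f_def using uv by (auto simp: image_iff)
  then have bij: "bij_betw f (verts G) (verts G)"
    unfolding bij_betw_def inj_on_def f_def by auto
  have agree: "adj G u w \<longleftrightarrow> adj G v w" if "w \<in> verts G" "w \<noteq> u" "w \<noteq> v" for w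
    using twin that unfolding twin_def by blast
  have sym: "adj G a b \<longleftrightarrow> adj G b a" for a b
    using simple_graph_adjD(4)[OF simple] by blast
  have irrefl: "\<not> adj G a a" for a
    using simple_graph_adjD(3)[OF simple] by blast
  have "adj G x y \<longleftrightarrow> adj G (f x) (f y)" if "x \<in> verts G" "y \<in> verts G" for x y
    unfolding f_def using agree[of x] agree[of y] that sym irrefl by (smt (verit))
  then have "automorphism G f" unfolding automorphism_def using bij by blast
  moreover have "\<forall>x\<in>verts G. c (f x) = c x" unfolding f_def using same_colour by auto
  ultimately have "f u = u" using c uv unfolding distinguishing_def by blast
  then show False using uv unfolding f_def by simp
qed

lemma distinguishing_number_le:
  "c ` verts G \<subseteq> {..<k} \<Longrightarrow> distinguishing G c \<Longrightarrow> distinguishing_number G \<le> k"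
  unfolding distinguishing_number_def by (rule Least_le) blast

lemma distinguishing_if_inj_on: "inj_on c (verts G) \<Longrightarrow> distinguishing G c"
  unfolding distinguishing_def by (metis automorphism_in inj_onD)

lemma obtain_distinguishing_colouring:
  assumes "finite (verts G)"
  obtains c where "c ` verts G \<subseteq> {..<distinguishing_number G}" "distinguishing G c"
proof -
  obtain c where "bij_betw c (verts G) {..<card (verts G)}"
    using ex_bij_betw_finite_nat[OF assms] by (auto simp: atLeast0LessThan)
  then have "c ` verts G \<subseteq> {..<card (verts G)}" "distinguishing G c"
    unfolding bij_betw_def by (auto intro: distinguishing_if_inj_on)
  then have "\<exists>k c. c ` verts G \<subseteq> {..<k} \<and> distinguishing G c" by blast
  from LeastI_ex[OF this] show ?thesis
    using that unfolding distinguishing_number_def by blast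
qed

lemma card_twin_set_le_distinguishing_number:
  assumes simple: "simple_graph G" and T: "T \<subseteq> verts G"
    and twins: "\<And>u v. u \<in> T \<Longrightarrow> v \<in> T \<Longrightarrow> u \<noteq> v \<Longrightarrow> twin G u v"
  shows "card T \<le> distinguishing_number G"
proof -
  obtain c where c: "c ` verts G \<subseteq> {..<distinguishing_number G}" "distinguishing G c"
    using obtain_distinguishing_colouring[OF simple_graph_finite[OF simple]] by blast
  have "inj_on c T" using twin_colours_differ[OF simple twins c(2)] unfolding inj_on_def by blast
  then have "card T \<le> card {..<distinguishing_number G}" using c(1) T by (intro card_inj_on_le) auto
  then show ?thesis by simp
qed

text \<open>Colour each degree class injectively; automorphisms preserve degrees.\<close>

lemma distinguishing_number_le_card_degree_class:
  assumes finite: "finite (verts G)"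
    and le: "\<And>x. x \<in> verts G \<Longrightarrow> card {y\<in>verts G. deg G y = deg G x} \<le> k"
  shows "distinguishing_number G \<le> k"
proof -
  define same_deg where "same_deg d = {y\<in>verts G. deg G y = d}" for d
  have "\<exists>g. bij_betw g (same_deg d) {..<card (same_deg d)}" for d
    using ex_bij_betw_finite_nat[of "same_deg d"] finite
    by (auto simp: same_deg_def atLeast0LessThan)
  then obtain g where g: "\<And>d. bij_betw (g d) (same_deg d) {..<card (same_deg d)}"
    by metis
  define c where "c x = g (deg G x) x" for x
  have "c x < k" if "x \<in> verts G" for x
  proof -
    have "x \<in> same_deg (deg G x)" using that unfolding same_deg_def by simp
    then have "c x < card (same_deg (deg G x))" unfolding c_def using bij_betwE[OF g] by blast
    then show ?thesis using le[OF that] unfolding same_deg_def by simp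
  qed
  moreover have "distinguishing G c"
  proof (rule distinguishing_if_inj_on_degree_classes)
    fix x y assume "x \<in> verts G" "y \<in> verts G" "c x = c y" "deg G x = deg G y"
    then have "x \<in> same_deg (deg G x)" "y \<in> same_deg (deg G x)" "g (deg G x) x = g (deg G x) y"
      unfolding same_deg_def c_def by auto
    then show "x = y" using bij_betw_imp_inj_on[OF g] by (blast dest: inj_onD)
  qed
  ultimately show ?thesis by (intro distinguishing_number_le) auto
qed

lemma distinguishing_number_twin_cover:
  assumes simple: "simple_graph G" and "finite \<P>" "\<P> \<noteq> {}" and cover: "\<Union>\<P> = verts G"
    and twins: "\<And>T u v. T \<in> \<P> \<Longrightarrow> u \<in> T \<Longrightarrow> v \<in> T \<Longrightarrow> u \<noteq> v \<Longrightarrow> twin G u v"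
    and degree_closed: "\<And>T x y. T \<in> \<P> \<Longrightarrow> x \<in> T \<Longrightarrow> y \<in> verts G \<Longrightarrow> deg G y = deg G x \<Longrightarrow> y \<in> T"
  shows "distinguishing_number G = Max (card ` \<P>)"
proof (rule antisym)
  have finite: "finite (verts G)" using simple_graph_finite[OF simple] .
  show "distinguishing_number G \<le> Max (card ` \<P>)"
  proof (rule distinguishing_number_le_card_degree_class[OF finite])
    fix x assume "x \<in> verts G"
    then obtain T where T: "T \<in> \<P>" "x \<in> T" using cover by blast
    then have "card {y\<in>verts G. deg G y = deg G x} \<le> card T"
      using degree_closed[OF T] finite cover by (intro card_mono) (auto intro: finite_subset)
    also have "\<dots> \<le> Max (card ` \<P>)" using T \<open>finite \<P>\<close> by simp
    finally show "card {y\<in>verts G. deg G y = deg G x} \<le> Max (card ` \<P>)" .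
  qed
  have "Max (card ` \<P>) \<in> card ` \<P>" using assms(2,3) by (intro Max_in) auto
  then obtain T where T: "T \<in> \<P>" "card T = Max (card ` \<P>)" by auto
  have "card T \<le> distinguishing_number G"
    by (rule card_twin_set_le_distinguishing_number[OF simple]) (use T twins cover in auto)
  then show "Max (card ` \<P>) \<le> distinguishing_number G" using T by simp
qed

lemma complete_bipartitionD:
  assumes "complete_bipartition G P Q"
  shows "verts G = P \<union> Q" "P \<inter> Q = {}" "adj G x y \<longleftrightarrow> (x \<in> P \<and> y \<in> Q) \<or> (x \<in> Q \<and> y \<in> P)"
  using assms unfolding complete_bipartition_def by auto

lemma complete_bipartition_commute: "complete_bipartition G P Q \<Longrightarrow> complete_bipartition G Q P"
  unfolding complete_bipartition_def by auto

lemma order_complete_bipartition: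
  "simple_graph G \<Longrightarrow> complete_bipartition G P Q \<Longrightarrow> order G = card P + card Q"
  using complete_bipartitionD[of G P Q] simple_graph_finite[of G] unfolding order_def
  by (simp add: card_Un_disjoint)

lemma complete_bipartition_twin:
  "complete_bipartition G P Q \<Longrightarrow> u \<in> P \<Longrightarrow> v \<in> P \<Longrightarrow> u \<noteq> v \<Longrightarrow> twin G u v"
  using complete_bipartitionD[of G P Q] unfolding twin_def by auto

lemma complete_bipartition_deg:
  assumes "complete_bipartition G P Q" "x \<in> P"
  shows "deg G x = card Q"
proof -
  have "{y\<in>verts G. adj G x y} = Q" using complete_bipartitionD[OF assms(1)] assms(2) by auto
  then show ?thesis unfolding deg_def by simp
qed

lemma distinguishing_number_unbalanced_complete_bipartition:
  assumes simple: "simple_graph G" and G: "complete_bipartition G P Q" and "card P \<noteq> card Q"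
  shows "distinguishing_number G = max (card P) (card Q)"
proof -
  note G' = complete_bipartition_commute[OF G]
  have "distinguishing_number G = Max (card ` {P, Q})"
  proof (rule distinguishing_number_twin_cover[OF simple])
    show "\<Union>{P, Q} = verts G" using complete_bipartitionD(1)[OF G] by simp
    show "twin G u v" if "T \<in> {P, Q}" "u \<in> T" "v \<in> T" "u \<noteq> v" for T u v
      using that complete_bipartition_twin[OF G] complete_bipartition_twin[OF G'] by blast
    show "y \<in> T" if "T \<in> {P, Q}" "x \<in> T" "y \<in> verts G" "deg G y = deg G x" for T x y
      using that complete_bipartition_deg[OF G] complete_bipartition_deg[OF G']
        complete_bipartitionD(1)[OF G] \<open>card P \<noteq> card Q\<close> by auto
  qed auto
  then show ?thesis by simp
qed

lemma bij_betw_colours_twin_set: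
  assumes simple: "simple_graph G" and dist: "distinguishing G c"
    and "finite T" "T \<subseteq> verts G" "c ` T \<subseteq> {..<card T}"
    and twins: "\<And>u v. u \<in> T \<Longrightarrow> v \<in> T \<Longrightarrow> u \<noteq> v \<Longrightarrow> twin G u v"
  shows "bij_betw c T {..<card T}"
proof -
  have "inj_on c T" using twin_colours_differ[OF simple twins dist] unfolding inj_on_def by blast
  moreover have "c ` T = {..<card T}"
    using assms(3,5) \<open>inj_on c T\<close> by (intro card_subset_eq) (auto simp: card_image)
  ultimately show ?thesis unfolding bij_betw_def by blast
qed

lemma complete_bipartition_swap_automorphism:
  assumes G: "complete_bipartition G P Q" and h: "bij_betw h P Q"
  shows "automorphism G (\<lambda>x. if x \<in> P then h x else inv_into P h x)" (is "automorphism G ?f")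
proof -
  note G = complete_bipartitionD[OF G]
  have "bij_betw ?f P Q" by (rule bij_betw_cong[THEN iffD2, OF _ h]) simp
  moreover have "bij_betw ?f Q P"
    by (rule bij_betw_cong[THEN iffD2, OF _ bij_betw_inv_into[OF h]]) (use G(2) in auto)
  ultimately have "bij_betw ?f (P \<union> Q) (Q \<union> P)" using G(2) by (intro bij_betw_combine) auto
  then have bij: "bij_betw ?f (verts G) (verts G)" using G(1) by (simp add: Un_commute)
  have side: "x \<in> P \<longleftrightarrow> ?f x \<in> Q" "x \<in> Q \<longleftrightarrow> ?f x \<in> P" if "x \<in> verts G" for x
    using that G(1,2) bij_betwE[OF h] bij_betwE[OF bij_betw_inv_into[OF h]] by auto
  show ?thesis
    unfolding automorphism_def using bij G(3) side by blast
qed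

text \<open>With only \<open>|P|\<close> colours each side uses every colour exactly once, and matching equal
  colours across the two sides is a colour-preserving automorphism.\<close>

lemma balanced_complete_bipartition_not_distinguishing:
  assumes simple: "simple_graph G" and G: "complete_bipartition G P Q"
    and card: "card Q = card P" "P \<noteq> {}" and c: "c ` verts G \<subseteq> {..<card P}"
  shows "\<not> distinguishing G c"
proof
  assume dist: "distinguishing G c"
  note G' = complete_bipartition_commute[OF G]
  have "finite P" "finite Q" using simple_graph_finite[OF simple] complete_bipartitionD(1)[OF G]
    by auto
  then have cP: "bij_betw c P {..<card P}" and cQ: "bij_betw c Q {..<card P}"
    using bij_betw_colours_twin_set[OF simple dist] complete_bipartition_twin[OF G]
      complete_bipartition_twin[OF G'] c card(1) complete_bipartitionD(1)[OF G] by (metis Un_upper1 Un_upper2 image_mono order_trans)+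
  define h where "h = inv_into Q c \<circ> c"
  have h: "bij_betw h P Q" unfolding h_def by (rule bij_betw_trans[OF cP bij_betw_inv_into[OF cQ]])
  have c_h: "c (h x) = c x" if "x \<in> P" for x
  proof -
    have "c x \<in> c ` Q" using cP cQ that unfolding bij_betw_def by blast
    then show ?thesis unfolding h_def by (simp add: f_inv_into_f)
  qed
  define f where "f x = (if x \<in> P then h x else inv_into P h x)" for x
  have "automorphism G f" unfolding f_def by (rule complete_bipartition_swap_automorphism[OF G h])
  moreover have "c (f x) = c x" if "x \<in> verts G" for x
  proof (cases "x \<in> P")
    case False
    then have "x \<in> Q" using that complete_bipartitionD(1)[OF G] by blast
    then have "inv_into P h x \<in> P" "h (inv_into P h x) = x"
      using bij_betwE[OF bij_betw_inv_into[OF h]] bij_betw_inv_into_right[OF h] by auto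
    then have "c (inv_into P h x) = c x" using c_h by metis
    then show ?thesis using False by (simp add: f_def)
  qed (simp add: f_def c_h)
  ultimately have "f x = x" if "x \<in> verts G" for x using dist that unfolding distinguishing_def by blast
  moreover obtain p where "p \<in> P" using card(2) by blast
  ultimately have "h p = p" using complete_bipartitionD(1)[OF G] unfolding f_def by force
  then show False using bij_betwE[OF h] \<open>p \<in> P\<close> complete_bipartitionD(2)[OF G] by (metis disjoint_iff)
qed

text \<open>Colour \<open>P\<close> injectively by \<open>0, \<dots>, |P| - 1\<close> and \<open>Q\<close> injectively by \<open>1, \<dots>, |P|\<close>.\<close>

lemma distinguishing_number_complete_bipartition_le:
  assumes simple: "simple_graph G" and G: "complete_bipartition G P Q"
    and "P \<noteq> {}" "card Q \<le> card P"
  shows "distinguishing_number G \<le> card P + 1"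
proof -
  note G = complete_bipartitionD[OF G]
  have finite: "finite P" "finite Q" using simple_graph_finite[OF simple] G(1) by auto
  obtain gP where gP: "bij_betw gP P {..<card P}"
    using ex_bij_betw_finite_nat[OF finite(1)] by (auto simp: atLeast0LessThan)
  obtain gQ where gQ: "bij_betw gQ Q {..<card Q}"
    using ex_bij_betw_finite_nat[OF finite(2)] by (auto simp: atLeast0LessThan)
  define c where "c x = (if x \<in> P then gP x else Suc (gQ x))" for x
  have "c x < card P + 1" if "x \<in> verts G" for x
    using that G(1) bij_betwE[OF gP] bij_betwE[OF gQ] \<open>card Q \<le> card P\<close> unfolding c_def by auto
  moreover have "distinguishing G c"
  proof -
    have "0 \<in> gP ` P"
      using bij_betw_imp_surj_on[OF gP] \<open>P \<noteq> {}\<close> finite(1) by (simp add: card_gt_0_iff)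
    then obtain a where a: "a \<in> P" "gP a = 0" by auto
    have "{y\<in>verts G. adj G a y} = Q" "{y\<in>verts G. \<not> adj G a y} = P"
      using a(1) G(1-3) by blast+
    moreover have "y = a" if "y \<in> verts G" "c y = c a" for y
    proof -
      have "y \<in> P" "gP y = gP a" using that a by (auto simp: c_def split: if_splits)
      then show ?thesis using inj_onD[OF bij_betw_imp_inj_on[OF gP]] a(1) by blast
    qed
    moreover have "inj_on c P"
      using bij_betw_imp_inj_on[OF gP] by (rule inj_on_cong[THEN iffD2, rotated]) (simp add: c_def)
    moreover have "inj_on c Q"
      using comp_inj_on[OF bij_betw_imp_inj_on[OF gQ] inj_Suc[THEN inj_on_subset, of "gQ ` Q"]]
      by (rule inj_on_cong[THEN iffD2, rotated]) (use G(2) in \<open>auto simp: c_def\<close>)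
    ultimately show ?thesis using distinguishing_if_unique_colour[of a G c] a(1) G(1) by simp
  qed
  ultimately show ?thesis by (intro distinguishing_number_le) auto
qed

lemma distinguishing_number_balanced_complete_bipartition:
  assumes simple: "simple_graph G" and G: "complete_bipartition G P Q"
    and "card Q = card P" "P \<noteq> {}"
  shows "distinguishing_number G = card P + 1"
proof (rule antisym)
  show "distinguishing_number G \<le> card P + 1"
    using distinguishing_number_complete_bipartition_le[OF simple G] assms(3,4) by simp
  obtain c where c: "c ` verts G \<subseteq> {..<distinguishing_number G}" "distinguishing G c"
    using obtain_distinguishing_colouring simple_graph_finite[OF simple] by blast
  have "card P \<le> distinguishing_number G"
    using card_twin_set_le_distinguishing_number[OF simple] complete_bipartition_twin[OF G]
      complete_bipartitionD(1)[OF G] by blast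
  moreover have "distinguishing_number G \<noteq> card P"
    using balanced_complete_bipartition_not_distinguishing[OF simple G] assms c by metis
  ultimately show "card P + 1 \<le> distinguishing_number G" by simp
qed

lemma join_partitionD:
  assumes "join_partition G X Y Z"
  shows "verts G = X \<union> Y \<union> Z" "X \<inter> Y = {}" "X \<inter> Z = {}" "Y \<inter> Z = {}"
    "adj G x y \<longleftrightarrow> x \<in> verts G \<and> y \<in> verts G \<and> x \<noteq> y \<and> (x \<in> X \<or> y \<in> X \<or> (x \<in> Y \<and> y \<in> Y))"
  using assms unfolding join_partition_def by auto

lemma order_join_partition:
  "simple_graph G \<Longrightarrow> join_partition G X Y Z \<Longrightarrow> order G = card X + card Y + card Z"
  using join_partitionD[of G X Y Z] simple_graph_finite[of G] unfolding order_def
  by (simp add: card_Un_disjoint Int_Un_distrib2)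

lemma join_partition_twin:
  assumes "join_partition G X Y Z" "T \<in> {X, Y, Z}" "u \<in> T" "v \<in> T" "u \<noteq> v"
  shows "twin G u v"
  using assms(2-) join_partitionD[OF assms(1)] unfolding twin_def by auto

lemma join_partition_deg:
  assumes simple: "simple_graph G" and G: "join_partition G X Y Z"
  shows "x \<in> X \<Longrightarrow> deg G x = card X + card Y + card Z - 1"
    and "x \<in> Y \<Longrightarrow> deg G x = card X + card Y - 1"
    and "x \<in> Z \<Longrightarrow> deg G x = card X"
proof -
  note G = join_partitionD[OF G]
  have finite: "finite X" "finite Y" "finite Z" using simple_graph_finite[OF simple] G(1) by auto
  show "deg G x = card X + card Y + card Z - 1" if "x \<in> X"
  proof -
    have "{y\<in>verts G. adj G x y} = verts G - {x}" using that G by auto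
    then show ?thesis using that G(1-4) finite
      by (simp add: deg_def card_Un_disjoint Int_Un_distrib2)
  qed
  show "deg G x = card X + card Y - 1" if "x \<in> Y"
  proof -
    have "{y\<in>verts G. adj G x y} = (X \<union> Y) - {x}" using that G by auto
    then show ?thesis using that G(2) finite by (simp add: deg_def card_Un_disjoint)
  qed
  show "deg G x = card X" if "x \<in> Z"
  proof -
    have "{y\<in>verts G. adj G x y} = X" using that G by auto
    then show ?thesis by (simp add: deg_def)
  qed
qed

text \<open>The hypotheses keep the degrees \<open>n - 1\<close>, \<open>|X| + |Y| - 1\<close> and \<open>|X|\<close> of the three
  parts apart.\<close>

lemma distinguishing_number_join_partition:
  assumes simple: "simple_graph G" and G: "join_partition G X Y Z"
    and "Z \<noteq> {}" "card Y \<noteq> 1" "card Y + card Z \<ge> 2"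
  shows "distinguishing_number G = max (card X) (max (card Y) (card Z))"
proof -
  have "distinguishing_number G = Max (card ` {X, Y, Z})"
  proof (rule distinguishing_number_twin_cover[OF simple])
    show "\<Union>{X, Y, Z} = verts G" using join_partitionD(1)[OF G] by auto
    show "twin G u v" if "T \<in> {X, Y, Z}" "u \<in> T" "v \<in> T" "u \<noteq> v" for T u v
      using join_partition_twin[OF G] that by blast
    have finite: "finite Y" "finite Z"
      using simple_graph_finite[OF simple] join_partitionD(1)[OF G] by auto
    have "card Z \<ge> 1" "card Y \<ge> 2" if "Y \<noteq> {}"
      using that finite \<open>Z \<noteq> {}\<close> \<open>card Y \<noteq> 1\<close> card_gt_0_iff[of Y] card_gt_0_iff[of Z]
      by linarith+
    then have "card X + card Y + card Z - 1 \<noteq> card X + card Y - 1"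
      "card X + card Y - 1 \<noteq> card X" if "Y \<noteq> {}"
      using that by auto
    moreover have "card X + card Y + card Z - 1 \<noteq> card X" using assms(5) by simp
    ultimately show "y \<in> T" if "T \<in> {X, Y, Z}" "x \<in> T" "y \<in> verts G" "deg G y = deg G x" for T x y
      using that join_partition_deg[OF simple G] join_partitionD(1)[OF G] by fastforce
  qed auto
  then show ?thesis by (simp add: max.assoc)
qed

lemma join_partition_merge_singleton:
  "join_partition G X {y} Z \<Longrightarrow> join_partition G X {} (insert y Z)"
  unfolding join_partition_def by auto

section \<open>Recognising the graphs of the theorem up to isomorphism\<close>

lemma complete_bipartition_complete_bipartite:
  "complete_bipartition (complete_bipartite s t) (Inl ` {..<s}) (Inr ` {..<t})"
  unfolding complete_bipartition_def complete_bipartite_def verts_def adj_def by auto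

lemma join_partition_join_edgeless:
  "join_partition (gjoin (complete s) (edgeless t)) (Inl ` {..<s}) {} (Inr ` {..<t})"
  unfolding join_partition_def gjoin_def complete_def edgeless_def verts_def adj_def
  by (auto split: sum.splits)

lemma join_partition_join_union:
  "join_partition (gjoin (complete s) (gunion (complete t) (complete 1)))
     (Inl ` {..<s}) (Inr ` Inl ` {..<t}) {Inr (Inr 0)}"
  unfolding join_partition_def gjoin_def gunion_def complete_def verts_def adj_def
  by (auto split: sum.splits)

lemma card_preimage_bij_betw:
  assumes "bij_betw f A B" "S \<subseteq> B"
  shows "card {x\<in>A. f x \<in> S} = card S"
proof -
  have "bij_betw f {x\<in>A. f x \<in> S} S"
    using assms unfolding bij_betw_def by (auto intro: inj_on_subset)
  then show ?thesis by (rule bij_betw_same_card)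
qed

lemma isomorphicE:
  assumes "isomorphic G H"
  obtains f where "bij_betw f (verts G) (verts H)"
    "\<And>x y. x \<in> verts G \<Longrightarrow> y \<in> verts G \<Longrightarrow> adj G x y \<longleftrightarrow> adj H (f x) (f y)"
  using assms unfolding isomorphic_def by blast

lemma complete_bipartition_preimage:
  assumes simple: "simple_graph G" and "isomorphic G H" and H: "complete_bipartition H P Q"
  obtains P' Q' where "complete_bipartition G P' Q'" "card P' = card P" "card Q' = card Q"
proof -
  obtain f where f: "bij_betw f (verts G) (verts H)"
    and adj: "\<And>x y. x \<in> verts G \<Longrightarrow> y \<in> verts G \<Longrightarrow> adj G x y \<longleftrightarrow> adj H (f x) (f y)"
    using isomorphicE[OF assms(2)] by blast
  note H = complete_bipartitionD[OF H]
  define P' where "P' = {x\<in>verts G. f x \<in> P}"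
  define Q' where "Q' = {x\<in>verts G. f x \<in> Q}"
  have "complete_bipartition G P' Q'"
    unfolding complete_bipartition_def
  proof (intro conjI allI)
    show "verts G = P' \<union> Q'" "P' \<inter> Q' = {}"
      using bij_betwE[OF f] H(1,2) unfolding P'_def Q'_def by auto
    show "adj G x y \<longleftrightarrow> (x \<in> P' \<and> y \<in> Q') \<or> (x \<in> Q' \<and> y \<in> P')" for x y
      using adj[of x y] H(3)[of "f x" "f y"] simple_graph_adjD[OF simple, of x y]
      unfolding P'_def Q'_def by blast
  qed
  moreover have "card P' = card P" "card Q' = card Q"
    unfolding P'_def Q'_def using card_preimage_bij_betw[OF f] H(1) by auto
  ultimately show ?thesis using that by blast
qed

lemma join_partition_preimage:
  assumes simple: "simple_graph G" and "isomorphic G H" and H: "join_partition H X Y Z"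
  obtains X' Y' Z' where "join_partition G X' Y' Z'"
    "card X' = card X" "card Y' = card Y" "card Z' = card Z"
proof -
  obtain f where f: "bij_betw f (verts G) (verts H)"
    and adj: "\<And>x y. x \<in> verts G \<Longrightarrow> y \<in> verts G \<Longrightarrow> adj G x y \<longleftrightarrow> adj H (f x) (f y)"
    using isomorphicE[OF assms(2)] by blast
  note H = join_partitionD[OF H]
  define X' where "X' = {x\<in>verts G. f x \<in> X}"
  define Y' where "Y' = {x\<in>verts G. f x \<in> Y}"
  define Z' where "Z' = {x\<in>verts G. f x \<in> Z}"
  have "join_partition G X' Y' Z'"
    unfolding join_partition_def
  proof (intro conjI allI)
    show "verts G = X' \<union> Y' \<union> Z'" "X' \<inter> Y' = {}" "X' \<inter> Z' = {}" "Y' \<inter> Z' = {}"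
      using bij_betwE[OF f] H(1-4) unfolding X'_def Y'_def Z'_def by auto
    have "f x = f y \<longleftrightarrow> x = y" if "x \<in> verts G" "y \<in> verts G" for x y
      using f that unfolding bij_betw_def inj_on_def by auto
    then show "adj G x y \<longleftrightarrow> x \<in> verts G \<and> y \<in> verts G \<and> x \<noteq> y \<and>
        (x \<in> X' \<or> y \<in> X' \<or> (x \<in> Y' \<and> y \<in> Y'))" for x y
      using adj[of x y] H(5)[of "f x" "f y"] simple_graph_adjD[OF simple, of x y] bij_betwE[OF f]
      unfolding X'_def Y'_def by auto
  qed
  moreover have "card X' = card X" "card Y' = card Y" "card Z' = card Z"
    unfolding X'_def Y'_def Z'_def using card_preimage_bij_betw[OF f] H(1) by auto
  ultimately show ?thesis using that by blast
qed

lemma isomorphic_if_complete_bipartitions: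
  assumes G: "complete_bipartition G P Q" and H: "complete_bipartition H P' Q'"
    and "finite P" "finite Q" "finite P'" "finite Q'" "card P = card P'" "card Q = card Q'"
  shows "isomorphic G H"
proof -
  obtain gP where gP: "bij_betw gP P P'" using finite_same_card_bij assms(3,5,7) by blast
  obtain gQ where gQ: "bij_betw gQ Q Q'" using finite_same_card_bij assms(4,6,8) by blast
  note G = complete_bipartitionD[OF G] and H = complete_bipartitionD[OF H]
  define f where "f x = (if x \<in> P then gP x else gQ x)" for x
  have "bij_betw f P P'" by (rule bij_betw_cong[THEN iffD2, OF _ gP]) (simp add: f_def)
  moreover have "bij_betw f Q Q'" by (rule bij_betw_cong[THEN iffD2, OF _ gQ]) (use G(2) in \<open>auto simp: f_def\<close>)
  ultimately have f: "bij_betw f (verts G) (verts H)"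
    unfolding G(1) H(1) using H(2) by (rule bij_betw_combine)
  have part: "f x \<in> P' \<longleftrightarrow> x \<in> P" "f x \<in> Q' \<longleftrightarrow> x \<in> Q" if "x \<in> verts G" for x
    using that G(1,2) H(2) bij_betwE[OF gP] bij_betwE[OF gQ] unfolding f_def by auto
  have "adj G x y \<longleftrightarrow> adj H (f x) (f y)" if "x \<in> verts G" "y \<in> verts G" for x y
    unfolding G(3) H(3) using part[OF that(1)] part[OF that(2)] by simp
  then show ?thesis unfolding isomorphic_def using f by blast
qed

lemma isomorphic_if_join_partitions:
  assumes G: "join_partition G X Y Z" and H: "join_partition H X' Y' Z'"
    and "finite X" "finite Y" "finite Z" "finite X'" "finite Y'" "finite Z'"
    and "card X = card X'" "card Y = card Y'" "card Z = card Z'"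
  shows "isomorphic G H"
proof -
  obtain gX where gX: "bij_betw gX X X'" using finite_same_card_bij assms(3,6,9) by blast
  obtain gY where gY: "bij_betw gY Y Y'" using finite_same_card_bij assms(4,7,10) by blast
  obtain gZ where gZ: "bij_betw gZ Z Z'" using finite_same_card_bij assms(5,8,11) by blast
  note G = join_partitionD[OF G] and H = join_partitionD[OF H]
  define f where "f x = (if x \<in> X then gX x else if x \<in> Y then gY x else gZ x)" for x
  have "bij_betw f X X'" by (rule bij_betw_cong[THEN iffD2, OF _ gX]) (simp add: f_def)
  moreover have "bij_betw f Y Y'" by (rule bij_betw_cong[THEN iffD2, OF _ gY]) (use G(2) in \<open>auto simp: f_def\<close>)
  moreover have "bij_betw f Z Z'" by (rule bij_betw_cong[THEN iffD2, OF _ gZ]) (use G(3,4) in \<open>auto simp: f_def\<close>)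
  ultimately have f: "bij_betw f (verts G) (verts H)"
    unfolding G(1) H(1) using H(2-4) by (intro bij_betw_combine) auto
  have part: "f x \<in> X' \<longleftrightarrow> x \<in> X" "f x \<in> Y' \<longleftrightarrow> x \<in> Y" if "x \<in> verts G" for x
    using that G(1-4) H(2-4) bij_betwE[OF gX] bij_betwE[OF gY] bij_betwE[OF gZ]
    unfolding f_def by auto
  have "adj G x y \<longleftrightarrow> adj H (f x) (f y)" if "x \<in> verts G" "y \<in> verts G" for x y
  proof -
    have "f x = f y \<longleftrightarrow> x = y" "f x \<in> verts H" "f y \<in> verts H"
      using f that unfolding bij_betw_def inj_on_def by auto
    then show ?thesis unfolding G(5) H(5) using that part[OF that(1)] part[OF that(2)] by simp
  qed
  then show ?thesis unfolding isomorphic_def using f by blast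
qed

lemma isomorphic_complete_bipartite_iff:
  assumes simple: "simple_graph G"
  shows "isomorphic G (complete_bipartite s t) \<longleftrightarrow>
    (\<exists>P Q. complete_bipartition G P Q \<and> card P = s \<and> card Q = t)"
proof
  assume "isomorphic G (complete_bipartite s t)"
  from complete_bipartition_preimage[OF simple this complete_bipartition_complete_bipartite]
  obtain P Q where "complete_bipartition G P Q" "card P = card (Inl ` {..<s} :: (nat + nat) set)"
    "card Q = card (Inr ` {..<t} :: (nat + nat) set)" .
  then show "\<exists>P Q. complete_bipartition G P Q \<and> card P = s \<and> card Q = t"
    by (auto simp: card_image)
next
  assume "\<exists>P Q. complete_bipartition G P Q \<and> card P = s \<and> card Q = t"
  then obtain P Q where G: "complete_bipartition G P Q" "card P = s" "card Q = t" by blast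
  have "finite P" "finite Q" using simple_graph_finite[OF simple] complete_bipartitionD(1)[OF G(1)] by auto
  then show "isomorphic G (complete_bipartite s t)"
    using isomorphic_if_complete_bipartitions[OF G(1) complete_bipartition_complete_bipartite] G(2,3)
    by (simp add: card_image)
qed

lemma isomorphic_join_edgeless_iff:
  assumes simple: "simple_graph G"
  shows "isomorphic G (gjoin (complete s) (edgeless t)) \<longleftrightarrow>
    (\<exists>X Z. join_partition G X {} Z \<and> card X = s \<and> card Z = t)"
proof
  assume "isomorphic G (gjoin (complete s) (edgeless t))"
  from join_partition_preimage[OF simple this join_partition_join_edgeless]
  obtain X Y Z where G: "join_partition G X Y Z" "card X = card (Inl ` {..<s} :: (nat + nat) set)"
    "card Y = 0" "card Z = card (Inr ` {..<t} :: (nat + nat) set)" by auto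
  have "Y = {}" using G(3) simple_graph_finite[OF simple] join_partitionD(1)[OF G(1)] by auto
  then show "\<exists>X Z. join_partition G X {} Z \<and> card X = s \<and> card Z = t"
    using G by (auto simp: card_image)
next
  assume "\<exists>X Z. join_partition G X {} Z \<and> card X = s \<and> card Z = t"
  then obtain X Z where G: "join_partition G X {} Z" "card X = s" "card Z = t" by blast
  have "finite X" "finite Z" using simple_graph_finite[OF simple] join_partitionD(1)[OF G(1)] by auto
  then show "isomorphic G (gjoin (complete s) (edgeless t))"
    using isomorphic_if_join_partitions[OF G(1) join_partition_join_edgeless] G(2,3)
    by (simp add: card_image)
qed

lemma isomorphic_join_union_iff:
  assumes simple: "simple_graph G"
  shows "isomorphic G (gjoin (complete s) (gunion (complete t) (complete 1))) \<longleftrightarrow>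
    (\<exists>X Y z. join_partition G X Y {z} \<and> card X = s \<and> card Y = t)"
proof
  assume "isomorphic G (gjoin (complete s) (gunion (complete t) (complete 1)))"
  from join_partition_preimage[OF simple this join_partition_join_union]
  obtain X Y Z where G: "join_partition G X Y Z"
    "card X = card (Inl ` {..<s} :: (nat + (nat + nat)) set)"
    "card Y = card (Inr ` Inl ` {..<t} :: (nat + (nat + nat)) set)" "card Z = 1" by auto
  then obtain z where "Z = {z}" by (meson card_1_singletonE)
  then show "\<exists>X Y z. join_partition G X Y {z} \<and> card X = s \<and> card Y = t"
    using G by (auto simp: card_image inj_on_def)
next
  assume "\<exists>X Y z. join_partition G X Y {z} \<and> card X = s \<and> card Y = t"
  then obtain X Y z where G: "join_partition G X Y {z}" "card X = s" "card Y = t" by blast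
  have "finite X" "finite Y" using simple_graph_finite[OF simple] join_partitionD(1)[OF G(1)] by auto
  then show "isomorphic G (gjoin (complete s) (gunion (complete t) (complete 1)))"
    using isomorphic_if_join_partitions[OF G(1) join_partition_join_union] G(2,3)
    by (simp add: card_image inj_on_def)
qed

context dim_order_minus_2
begin

lemma join_partition_nonadjacent:
  assumes "join_partition G X Y Z"
  obtains z w where "z \<in> Z" "w \<in> Y \<union> Z" "z \<noteq> w"
  using ex_nonadjacent join_partitionD[OF assms] by (metis Un_iff)

lemma card_independent_part_ge_2:
  assumes G: "join_partition G X {} Z"
  shows "card Z \<ge> 2"
proof -
  obtain z w where "z \<in> Z" "w \<in> Z" "z \<noteq> w" using join_partition_nonadjacent[OF G] by blast
  moreover have "finite Z" using finite_V join_partitionD(1)[OF G] by auto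
  ultimately have "card {z, w} \<le> card Z" by (intro card_mono) auto
  with \<open>z \<noteq> w\<close> show ?thesis by simp
qed

lemma clique_part_nonempty: "join_partition G X Y {c} \<Longrightarrow> Y \<noteq> {}"
  using join_partition_nonadjacent by (metis Un_empty_left singletonD)

lemma distinguishing_number_eq_iff_complete_bipartition:
  assumes G: "complete_bipartition G P Q"
  shows "distinguishing_number G = order G - l \<longleftrightarrow>
    (card P = l + 1 \<and> card Q = l + 1) \<or> (card P \<ge> l + 1 \<and> card Q = l) \<or> (card Q \<ge> l + 1 \<and> card P = l)"
proof (cases "card Q = card P")
  case True
  moreover have "P \<noteq> {}" using order_complete_bipartition[OF simple G] True card_V_ge_4
    unfolding order_def by auto
  ultimately show ?thesis
    using distinguishing_number_balanced_complete_bipartition[OF simple G]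
      order_complete_bipartition[OF simple G] card_V_ge_4 unfolding order_def by auto
next
  case False
  then show ?thesis
    using distinguishing_number_unbalanced_complete_bipartition[OF simple G]
      order_complete_bipartition[OF simple G] card_V_ge_4 unfolding order_def by auto
qed

lemma distinguishing_number_eq_iff_join_edgeless:
  assumes G: "join_partition G X {} Z"
  shows "distinguishing_number G = order G - l \<longleftrightarrow>
    (card X = l \<and> card Z \<ge> l) \<or> (l \<ge> 2 \<and> card Z = l \<and> card X \<ge> l)"
proof -
  have "card Z \<ge> 2" by (rule card_independent_part_ge_2[OF G])
  moreover have "Z \<noteq> {}" using \<open>card Z \<ge> 2\<close> by auto
  ultimately have "distinguishing_number G = max (card X) (card Z)"
    using distinguishing_number_join_partition[OF simple G] by simp
  then show ?thesis using order_join_partition[OF simple G] \<open>card Z \<ge> 2\<close> by auto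
qed

lemma distinguishing_number_eq_iff_join_union:
  assumes G: "join_partition G X Y {c}" and "l \<ge> 1"
  shows "distinguishing_number G = order G - l \<longleftrightarrow>
    (card X = l - 1 \<and> card Y \<ge> max 2 (l - 1)) \<or> (card Y = l - 1 \<and> card X \<ge> max 2 (l - 1))"
proof -
  have n: "order G = card X + card Y + 1" using order_join_partition[OF simple G] by simp
  have "card Y \<noteq> 0" using clique_part_nonempty[OF G] finite_V join_partitionD(1)[OF G] by auto
  then consider "card Y \<ge> 2" | "card Y = 1" by linarith
  then show ?thesis
  proof cases
    case 1
    then have "distinguishing_number G = max (card X) (card Y)"
      using distinguishing_number_join_partition[OF simple G] by auto
    then show ?thesis using n 1 \<open>l \<ge> 1\<close> by auto
  next
    case 2
    then obtain y where "Y = {y}" by (meson card_1_singletonE)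
    then have G': "join_partition G X {} {y, c}" using join_partition_merge_singleton G by simp
    then have "card {y, c} = 2"
      using card_independent_part_ge_2[OF G'] by (auto simp: card_insert_if split: if_splits)
    then have "distinguishing_number G = max (card X) 2"
      using distinguishing_number_join_partition[OF simple G'] by simp
    then show ?thesis using n 2 card_V_ge_4 \<open>l \<ge> 1\<close> unfolding order_def by auto
  qed
qed


lemma distinguishing_number_eq_order_minus_iff:
  assumes "l \<ge> 1"
  shows "distinguishing_number G = order G - l \<longleftrightarrow>
    (\<exists>P Q. complete_bipartition G P Q \<and> card P = l + 1 \<and> card Q = l + 1)
  \<or> (\<exists>t. t \<ge> l + 1 \<and> (\<exists>P Q. complete_bipartition G P Q \<and> card P = t \<and> card Q = l))
  \<or> (\<exists>t. t \<ge> l \<and> (\<exists>X Z. join_partition G X {} Z \<and> card X = l \<and> card Z = t))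
  \<or> (\<exists>t. t \<ge> l \<and> l \<ge> 2 \<and> (\<exists>X Z. join_partition G X {} Z \<and> card X = t \<and> card Z = l))
  \<or> (\<exists>t. t \<ge> max 2 (l - 1) \<and> (\<exists>X Y z. join_partition G X Y {z} \<and> card X = l - 1 \<and> card Y = t))
  \<or> (\<exists>t. t \<ge> max 2 (l - 1) \<and> (\<exists>X Y z. join_partition G X Y {z} \<and> card X = t \<and> card Y = l - 1))"
  (is "?D \<longleftrightarrow> ?a \<or> ?b \<or> ?c \<or> ?d \<or> ?e \<or> ?f")
proof
  assume D: ?D
  from classification show "?a \<or> ?b \<or> ?c \<or> ?d \<or> ?e \<or> ?f"
  proof (elim disjE exE)
    fix P Q assume G: "complete_bipartition G P Q"
    note cases = distinguishing_number_eq_iff_complete_bipartition[OF G, THEN iffD1, OF D]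
    have "?b" if "card Q \<ge> l + 1" "card P = l"
      using complete_bipartition_commute[OF G] that by blast
    then show ?thesis using cases G by blast
  next
    fix X Z assume G: "join_partition G X {} Z"
    show ?thesis
      using distinguishing_number_eq_iff_join_edgeless[OF G, THEN iffD1, OF D] G by blast
  next
    fix X Y z assume G: "join_partition G X Y {z}"
    show ?thesis
      using distinguishing_number_eq_iff_join_union[OF G assms, THEN iffD1, OF D] G by blast
  qed
next
  assume "?a \<or> ?b \<or> ?c \<or> ?d \<or> ?e \<or> ?f"
  then show ?D
    by (elim disjE exE conjE)
      (simp_all add: distinguishing_number_eq_iff_complete_bipartition
        distinguishing_number_eq_iff_join_edgeless distinguishing_number_eq_iff_join_union[OF _ assms])
qed

end


theorem proposition2p4:
  fixes G :: "'a graph" and l :: nat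
  assumes "simple_graph G"
    and "connected_graph G"
    and "metric_dim G = order G - 2"
    and "order G - 2 \<ge> 2"
    and "l \<ge> 1"
  shows "distinguishing_number G = order G - l \<longleftrightarrow>
     (isomorphic G (complete_bipartite (l + 1) (l + 1))
    \<or> (\<exists>t. t \<ge> l + 1 \<and> isomorphic G (complete_bipartite t l))
    \<or> (\<exists>t. t \<ge> l \<and> isomorphic G (gjoin (complete l) (edgeless t)))
    \<or> (\<exists>t. t \<ge> l \<and> l \<ge> 2 \<and> isomorphic G (gjoin (complete t) (edgeless l)))
    \<or> (\<exists>t. t \<ge> max 2 (l - 1) \<and>
           isomorphic G (gjoin (complete (l - 1)) (gunion (complete t) (complete 1))))
    \<or> (\<exists>t. t \<ge> max 2 (l - 1) \<and>
           isomorphic G (gjoin (complete t) (gunion (complete (l - 1)) (complete 1)))))"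
proof -
  interpret dim_order_minus_2 G using assms(1-4) by unfold_locales
  show ?thesis
    unfolding isomorphic_complete_bipartite_iff[OF simple] isomorphic_join_edgeless_iff[OF simple]
      isomorphic_join_union_iff[OF simple]
    by (rule distinguishing_number_eq_order_minus_iff[OF assms(5)])
qed

end
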